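(* Let $G=(V,E)$ and $H=(U,F)$ be finite simple graphs, each with $n$ vertices. Then the uniqueness tree algorithm (tree generation stage followed by tree comparison stage, as described in the context) applied to $G$ and $H$ runs in time $O(n^7)$ in the worst case.
   Context: A simple graph is a finite, unweighted, undirected graph with no loops or multiple edges; the size $n$ of a graph is its number of vertices. The uniqueness tree algorithm, applied to two graphs $G=(V,E)$ and $H=(U,F)$ of size $n$, consists of two stages. Tree generation stage: for each graph and each vertex $v$ of it, build a rooted tree $T(v)$ whose nodes are labelled by vertices of the graph, level by level. Level $0$ consists of the root, labelled $v$. Given the current level, a node of that level is called unique if its label occurs exactly once among the labels of the nodes of that level. Each non-unique node becomes a leaf (no children); each unique node labelled $u$ receives one child for each neighbour $w$ of $u$ in the graph, labelled $w$; these children form the next level. This is repeated while some node on the current level is unique and the height of $T(v)$ is less than $n$. Tree comparison stage: initially no vertex is mapped. For each unmapped $v\in V$ and, in turn, each unmapped $u\in U$, declare $v$ and $u$ equivalent unless one of the following holds: the heights of $T(v)$ and $T(u)$ differ; for some level, the numbers of nodes on that level of $T(v)$ and $T(u)$ differ; for some level and some $i\in\{1,\dots,n-1\}$, the number of nodes on that level having exactly $i$ children differs between $T(v)$ and $T(u)$. If $v$ and $u$ are equivalent, mark both as mapped (map $v$ onto $u$). At the end, output "$G\cong H$" if all vertices of $V$ and $U$ have been mapped, and "$G\not\cong H$" otherwise. *)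

theory Defs
  imports Main "HOL-Library.Time_Functions" "HOL-Library.Landau_Symbols"
begin

text \<open>A simple graph of size n has vertex set {0..<n}; adj ! u is the list of
neighbours of u (distinct, in range, no loops, symmetric).\<close>

definition simple_graph_adj :: "nat \<Rightarrow> nat list list \<Rightarrow> bool" where
  "simple_graph_adj n adj \<longleftrightarrow> length adj = n \<and>
     (\<forall>u<n. distinct (adj ! u) \<and> set (adj ! u) \<subseteq> {..<n} \<and> u \<notin> set (adj ! u)) \<and>
     (\<forall>u<n. \<forall>w<n. w \<in> set (adj ! u) \<longleftrightarrow> u \<in> set (adj ! w))"

text \<open>A tree is the list of its levels; a level is the list of its nodes,
each node given as (label, number of children).\<close>

fun cnt :: "nat \<Rightarrow> nat list \<Rightarrow> nat" where
  "cnt x [] = 0"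
| "cnt x (y # ys) = (if x = y then Suc (cnt x ys) else cnt x ys)"
fun T_cnt :: "nat \<Rightarrow> nat list \<Rightarrow> nat" where
  "T_cnt x [] = 1"
| "T_cnt x (y # ys) = (if x = y then T_cnt x ys else T_cnt x ys) + 1"

fun any_unique :: "nat list \<Rightarrow> nat list \<Rightarrow> bool" where
  "any_unique L [] = False"
| "any_unique L (x # xs) = (if cnt x L = 1 then True else any_unique L xs)"
fun T_any_unique :: "nat list \<Rightarrow> nat list \<Rightarrow> nat" where
  "T_any_unique L [] = 1"
| "T_any_unique L (x # xs) = T_cnt x L + (if cnt x L = 1 then 0 else T_any_unique L xs) + 1"

fun next_level :: "nat list list \<Rightarrow> nat list \<Rightarrow> nat list \<Rightarrow> nat list" where
  "next_level adj L [] = []"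
| "next_level adj L (x # xs) =
     (if cnt x L = 1 then adj ! x @ next_level adj L xs else next_level adj L xs)"
fun T_next_level :: "nat list list \<Rightarrow> nat list \<Rightarrow> nat list \<Rightarrow> nat" where
  "T_next_level adj L [] = 1"
| "T_next_level adj L (x # xs) = T_cnt x L +
     (if cnt x L = 1 then T_nth adj x + T_append (adj ! x) (next_level adj L xs) + T_next_level adj L xs
      else T_next_level adj L xs) + 1"

fun annotate :: "nat list list \<Rightarrow> nat list \<Rightarrow> nat list \<Rightarrow> (nat \<times> nat) list" where
  "annotate adj L [] = []"
| "annotate adj L (x # xs) =
     (if cnt x L = 1 then (x, length (adj ! x)) # annotate adj L xs
      else (x, 0) # annotate adj L xs)"
fun T_annotate :: "nat list list \<Rightarrow> nat list \<Rightarrow> nat list \<Rightarrow> nat" where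
  "T_annotate adj L [] = 1"
| "T_annotate adj L (x # xs) = T_cnt x L +
     (if cnt x L = 1 then T_nth adj x + T_length (adj ! x) + T_annotate adj L xs
      else T_annotate adj L xs) + 1"

fun leaves :: "nat list \<Rightarrow> (nat \<times> nat) list" where
  "leaves [] = []"
| "leaves (x # xs) = (x, 0) # leaves xs"
fun T_leaves :: "nat list \<Rightarrow> nat" where
  "T_leaves [] = 1"
| "T_leaves (x # xs) = T_leaves xs + 1"

text \<open>gen adj k L: grow the tree from current level L, where k is the number
of further levels still allowed (n minus the current height).\<close>

fun gen :: "nat list list \<Rightarrow> nat \<Rightarrow> nat list \<Rightarrow> (nat \<times> nat) list list" where
  "gen adj 0 L = [leaves L]"
| "gen adj (Suc k) L =
     (if any_unique L L then annotate adj L L # gen adj k (next_level adj L L)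
      else [leaves L])"
fun T_gen :: "nat list list \<Rightarrow> nat \<Rightarrow> nat list \<Rightarrow> nat" where
  "T_gen adj 0 L = T_leaves L + 1"
| "T_gen adj (Suc k) L = T_any_unique L L +
     (if any_unique L L then T_annotate adj L L + T_next_level adj L L + T_gen adj k (next_level adj L L)
      else T_leaves L) + 1"

fun utree :: "nat list list \<Rightarrow> nat \<Rightarrow> nat \<Rightarrow> (nat \<times> nat) list list" where
  "utree adj n v = gen adj n [v]"
fun T_utree :: "nat list list \<Rightarrow> nat \<Rightarrow> nat \<Rightarrow> nat" where
  "T_utree adj n v = T_gen adj n [v] + 1"

fun gen_trees :: "nat list list \<Rightarrow> nat \<Rightarrow> nat \<Rightarrow> (nat \<times> nat) list list list
                    \<Rightarrow> (nat \<times> nat) list list list" where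
  "gen_trees adj n 0 acc = acc"
| "gen_trees adj n (Suc k) acc = gen_trees adj n k (utree adj n k # acc)"
fun T_gen_trees :: "nat list list \<Rightarrow> nat \<Rightarrow> nat \<Rightarrow> (nat \<times> nat) list list list \<Rightarrow> nat" where
  "T_gen_trees adj n 0 acc = 1"
| "T_gen_trees adj n (Suc k) acc = T_utree adj n k + T_gen_trees adj n k (utree adj n k # acc) + 1"

fun count_children :: "nat \<Rightarrow> (nat \<times> nat) list \<Rightarrow> nat" where
  "count_children i [] = 0"
| "count_children i (p # ps) =
     (if snd p = i then Suc (count_children i ps) else count_children i ps)"
fun T_count_children :: "nat \<Rightarrow> (nat \<times> nat) list \<Rightarrow> nat" where
  "T_count_children i [] = 1"
| "T_count_children i (p # ps) = T_snd p + T_count_children i ps + 1"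

fun check_is :: "nat \<Rightarrow> (nat \<times> nat) list \<Rightarrow> (nat \<times> nat) list \<Rightarrow> bool" where
  "check_is 0 a b = True"
| "check_is (Suc i) a b =
     (if count_children (Suc i) a = count_children (Suc i) b then check_is i a b else False)"
fun T_check_is :: "nat \<Rightarrow> (nat \<times> nat) list \<Rightarrow> (nat \<times> nat) list \<Rightarrow> nat" where
  "T_check_is 0 a b = 1"
| "T_check_is (Suc i) a b = T_count_children (Suc i) a + T_count_children (Suc i) b +
     (if count_children (Suc i) a = count_children (Suc i) b then T_check_is i a b else 0) + 1"

fun levels_ok :: "nat \<Rightarrow> (nat \<times> nat) list list \<Rightarrow> (nat \<times> nat) list list \<Rightarrow> bool" where
  "levels_ok n [] [] = True"
| "levels_ok n (a # as) (b # bs) =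
     (if length a = length b then (if check_is (n - 1) a b then levels_ok n as bs else False)
      else False)"
| "levels_ok n [] (b # bs) = False"
| "levels_ok n (a # as) [] = False"
fun T_levels_ok :: "nat \<Rightarrow> (nat \<times> nat) list list \<Rightarrow> (nat \<times> nat) list list \<Rightarrow> nat" where
  "T_levels_ok n [] [] = 1"
| "T_levels_ok n (a # as) (b # bs) = T_length a + T_length b +
     (if length a = length b
      then T_check_is (n - 1) a b + (if check_is (n - 1) a b then T_levels_ok n as bs else 0)
      else 0) + 1"
| "T_levels_ok n [] (b # bs) = 1"
| "T_levels_ok n (a # as) [] = 1"

fun equiv_trees :: "nat \<Rightarrow> (nat \<times> nat) list list \<Rightarrow> (nat \<times> nat) list list \<Rightarrow> bool" where
  "equiv_trees n T S = (if length T = length S then levels_ok n T S else False)"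
fun T_equiv_trees :: "nat \<Rightarrow> (nat \<times> nat) list list \<Rightarrow> (nat \<times> nat) list list \<Rightarrow> nat" where
  "T_equiv_trees n T S = T_length T + T_length S +
     (if length T = length S then T_levels_ok n T S else 0) + 1"

text \<open>match_one n T Ss: scan the still unmapped trees Ss of H in turn; map T
onto the first equivalent one (returned flag True) and remove it.\<close>

fun match_one :: "nat \<Rightarrow> (nat \<times> nat) list list \<Rightarrow> (nat \<times> nat) list list list
                    \<Rightarrow> bool \<times> (nat \<times> nat) list list list" where
  "match_one n T [] = (False, [])"
| "match_one n T (S # Ss) =
     (if equiv_trees n T S then (True, Ss)
      else (let r = match_one n T Ss in (fst r, S # snd r)))"
fun T_match_one :: "nat \<Rightarrow> (nat \<times> nat) list list \<Rightarrow> (nat \<times> nat) list list list \<Rightarrow> nat" where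
  "T_match_one n T [] = 1"
| "T_match_one n T (S # Ss) = T_equiv_trees n T S +
     (if equiv_trees n T S then 0
      else T_match_one n T Ss + T_fst (match_one n T Ss) + T_snd (match_one n T Ss)) + 1"

fun compare_all :: "nat \<Rightarrow> (nat \<times> nat) list list list \<Rightarrow> (nat \<times> nat) list list list \<Rightarrow> bool" where
  "compare_all n [] [] = True"
| "compare_all n [] (S # Ss) = False"
| "compare_all n (T # Ts) Ss =
     (let r = match_one n T Ss; rest = compare_all n Ts (snd r) in
      (if fst r then rest else False))"
fun T_compare_all :: "nat \<Rightarrow> (nat \<times> nat) list list list \<Rightarrow> (nat \<times> nat) list list list \<Rightarrow> nat" where
  "T_compare_all n [] [] = 1"
| "T_compare_all n [] (S # Ss) = 1"
| "T_compare_all n (T # Ts) Ss = T_match_one n T Ss + T_snd (match_one n T Ss) +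
     T_compare_all n Ts (snd (match_one n T Ss)) + T_fst (match_one n T Ss) + 1"

text \<open>The whole uniqueness tree algorithm; True means output "G \<cong> H".\<close>

fun uniqueness_tree_alg :: "nat \<Rightarrow> nat list list \<Rightarrow> nat list list \<Rightarrow> bool" where
  "uniqueness_tree_alg n adjG adjH =
     compare_all n (gen_trees adjG n n []) (gen_trees adjH n n [])"
fun T_uniqueness_tree_alg :: "nat \<Rightarrow> nat list list \<Rightarrow> nat list list \<Rightarrow> nat" where
  "T_uniqueness_tree_alg n adjG adjH =
     T_gen_trees adjG n n [] + T_gen_trees adjH n n [] +
     T_compare_all n (gen_trees adjG n n []) (gen_trees adjH n n []) + 1"

text \<open>Worst-case running time over all pairs of simple graphs of size n
(the set is finite, adjacency lists being distinct lists over {0..<n}).\<close>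

definition worst_time :: "nat \<Rightarrow> nat" where
  "worst_time n = Max {T_uniqueness_tree_alg n adjG adjH | adjG adjH.
                         simple_graph_adj n adjG \<and> simple_graph_adj n adjH}"

end

theory Submission
  imports Defs "HOL-Real_Asymp.Real_Asymp"
begin

text \<open>Every level of a uniqueness tree has at most (n+1)^2 nodes: only unique nodes have
children, unique labels on a level are distinct vertices, and each has at most n
neighbours. Growing one level therefore costs O(n^4) steps, a tree has at most n+1
levels, so generating all 2n trees costs O(n^6). Comparing two trees inspects at most
n+1 levels, testing n-1 child counts on each at cost O(n^2), i.e. O(n^4), and the
comparison stage tests at most n^2 pairs of trees: O(n^6) again.\<close>

lemma T_cnt_eq: "T_cnt x L = length L + 1"
  by (induction L) auto

lemma cnt_eq_0_iff: "cnt x L = 0 \<longleftrightarrow> x \<notin> set L"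
  by (induction L) auto

lemma T_leaves_eq: "T_leaves xs = length xs + 1"
  by (induction xs) auto

lemma T_count_children_eq: "T_count_children i a = length a + 1"
  by (induction a) auto

lemma T_fst_eq_0 [simp]: "T_fst p = 0"
  by (cases p) simp

lemma T_snd_eq_0 [simp]: "T_snd p = 0"
  by (cases p) simp

lemma length_annotate [simp]: "length (annotate adj L xs) = length xs"
  by (induction xs) auto

lemma length_leaves [simp]: "length (leaves xs) = length xs"
  by (induction xs) auto

lemma next_level_eq: "next_level adj L xs = concat (map ((!) adj) (filter (\<lambda>x. cnt x L = 1) xs))"
  by (induction xs) auto

lemma distinct_filter_if_cnt_le_1:
  "(\<And>x. P x \<Longrightarrow> cnt x xs \<le> 1) \<Longrightarrow> distinct (filter P xs)"
proof (induction xs)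
  case (Cons y ys)
  have "cnt x ys \<le> 1" if "P x" for x
    using Cons.prems[OF that] by (auto split: if_splits)
  moreover have "y \<notin> set ys" if "P y"
    using Cons.prems[OF that] cnt_eq_0_iff[of y ys] by simp
  ultimately show ?case using Cons.IH by auto
qed simp

lemma distinct_unique_labels: "distinct (filter (\<lambda>x. cnt x L = 1) L)"
  by (rule distinct_filter_if_cnt_le_1) simp

definition adj_bounded :: "nat \<Rightarrow> nat list list \<Rightarrow> bool" where
  "adj_bounded n adj \<longleftrightarrow> length adj = n \<and> (\<forall>u<n. set (adj ! u) \<subseteq> {..<n} \<and> length (adj ! u) \<le> n)"

lemma simple_graph_adj_imp_adj_bounded:
  assumes "simple_graph_adj n adj"
  shows "adj_bounded n adj"
  unfolding adj_bounded_def
proof (intro conjI allI impI)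
  fix u assume "u < n"
  then have "distinct (adj ! u)" and range: "set (adj ! u) \<subseteq> {..<n}"
    using assms by (auto simp: simple_graph_adj_def)
  then show "set (adj ! u) \<subseteq> {..<n}" by blast
  have "length (adj ! u) = card (set (adj ! u))"
    using \<open>distinct (adj ! u)\<close> by (simp add: distinct_card)
  also have "\<dots> \<le> card {..<n}"
    using range by (intro card_mono) auto
  finally show "length (adj ! u) \<le> n" by simp
qed (use assms in \<open>simp add: simple_graph_adj_def\<close>)

lemma set_next_level_subset:
  "adj_bounded n adj \<Longrightarrow> set xs \<subseteq> {..<n} \<Longrightarrow> set (next_level adj L xs) \<subseteq> {..<n}"
  by (induction xs) (auto simp: adj_bounded_def)

lemma length_next_level_le:
  assumes "adj_bounded n adj" "set L \<subseteq> {..<n}"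
  shows "length (next_level adj L L) \<le> n * n"
proof -
  let ?U = "filter (\<lambda>x. cnt x L = 1) L"
  have "length ?U = card (set ?U)"
    by (rule distinct_card[OF distinct_unique_labels, symmetric])
  also have "\<dots> \<le> card {..<n}"
    using assms(2) by (intro card_mono) auto
  finally have "length ?U \<le> n" by simp
  have "length (next_level adj L L) = (\<Sum>x\<leftarrow>?U. length (adj ! x))"
    by (simp add: next_level_eq length_concat comp_def)
  also have "\<dots> \<le> (\<Sum>x\<leftarrow>?U. n)"
    using assms by (intro sum_list_mono) (auto simp: adj_bounded_def)
  also have "\<dots> \<le> n * n"
    using \<open>length ?U \<le> n\<close> by (simp add: sum_list_triv)
  finally show ?thesis .
qed

section \<open>Cost of the tree generation stage\<close>

lemma T_any_unique_le: "T_any_unique L xs \<le> length xs * (length L + 2) + 1"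
  by (induction xs) (auto simp: T_cnt_eq)

lemma T_next_level_le:
  assumes "adj_bounded n adj"
  shows "set xs \<subseteq> {..<n} \<Longrightarrow> T_next_level adj L xs \<le> length xs * (length L + 2 * n + 3) + 1"
proof (induction xs)
  case (Cons x xs)
  then have "x < n" by simp
  with assms have "T_nth adj x = x + 1" "length (adj ! x) \<le> n"
    by (simp_all add: adj_bounded_def T_nth)
  with Cons show ?case by (auto simp: T_cnt_eq T_append)
qed simp

lemma T_annotate_le:
  assumes "adj_bounded n adj"
  shows "set xs \<subseteq> {..<n} \<Longrightarrow> T_annotate adj L xs \<le> length xs * (length L + 2 * n + 3) + 1"
proof (induction xs)
  case (Cons x xs)
  then have "x < n" by simp
  with assms have "T_nth adj x = x + 1" "length (adj ! x) \<le> n"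
    by (simp_all add: adj_bounded_def T_nth)
  with Cons show ?case by (auto simp: T_cnt_eq T_length)
qed simp

lemma T_gen_le:
  assumes "adj_bounded n adj"
  shows "set L \<subseteq> {..<n} \<Longrightarrow> length L \<le> Suc n ^ 2 \<Longrightarrow> T_gen adj k L \<le> (k + 1) * (16 * Suc n ^ 4)"
proof (induction k arbitrary: L)
  case 0
  have "Suc n ^ 2 \<le> Suc n ^ 4" by (rule power_increasing) auto
  moreover have "1 \<le> Suc n ^ 4" by simp
  ultimately have "length L + 2 \<le> 16 * Suc n ^ 4" using 0 by linarith
  then show ?case by (simp add: T_leaves_eq)
next
  case (Suc k)
  let ?m = "length L" and ?N = "Suc n"
  have "?m * (?m + 2 * n + 3) \<le> ?N ^ 2 * (4 * ?N ^ 2)"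
    using Suc.prems(2) by (intro mult_le_mono) (auto simp: power2_eq_square)
  then have level: "?m * (?m + 2 * n + 3) \<le> 4 * ?N ^ 4"
    by (simp add: power2_eq_square power4_eq_xxxx algebra_simps)
  have "T_any_unique L L \<le> ?m * (?m + 2 * n + 3) + 1"
    using T_any_unique_le[of L L] mult_le_mono2[of "?m + 2" "?m + 2 * n + 3" ?m] by linarith
  moreover have "T_annotate adj L L \<le> ?m * (?m + 2 * n + 3) + 1"
    using T_annotate_le[OF assms Suc.prems(1)] .
  moreover have "T_next_level adj L L \<le> ?m * (?m + 2 * n + 3) + 1"
    using T_next_level_le[OF assms Suc.prems(1)] .
  moreover have "T_gen adj k (next_level adj L L) \<le> (k + 1) * (16 * ?N ^ 4)"
    using set_next_level_subset[OF assms Suc.prems(1)] length_next_level_le[OF assms Suc.prems(1)]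
    by (intro Suc.IH) (auto simp: power2_eq_square)
  moreover have "1 \<le> ?N ^ 4" by simp
  moreover have "T_leaves L \<le> 16 * ?N ^ 4"
    using Suc.prems(2) power_increasing[of 2 4 ?N] \<open>1 \<le> ?N ^ 4\<close>
    unfolding T_leaves_eq by linarith
  ultimately show ?case using level
    by (cases "any_unique L L"; simp; linarith)
qed

lemma length_gen_le: "length (gen adj k L) \<le> k + 1"
  by (induction k arbitrary: L) auto

lemma length_gen_level_le:
  assumes "adj_bounded n adj"
  shows "set L \<subseteq> {..<n} \<Longrightarrow> length L \<le> Suc n ^ 2 \<Longrightarrow> a \<in> set (gen adj k L) \<Longrightarrow> length a \<le> Suc n ^ 2"
proof (induction k arbitrary: L)
  case (Suc k)
  have "length (next_level adj L L) \<le> Suc n ^ 2"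
    using length_next_level_le[OF assms Suc.prems(1)] by (simp add: power2_eq_square)
  moreover have "set (next_level adj L L) \<subseteq> {..<n}"
    using set_next_level_subset[OF assms Suc.prems(1)] .
  ultimately show ?case using Suc by (auto split: if_splits)
qed simp

lemma gen_trees_eq: "gen_trees adj n k acc = map (utree adj n) [0..<k] @ acc"
  by (induction k arbitrary: acc) auto

lemma T_gen_trees_le:
  "(\<And>v. v < k \<Longrightarrow> T_utree adj n v \<le> C) \<Longrightarrow> T_gen_trees adj n k acc \<le> k * (C + 1) + 1"
proof (induction k arbitrary: acc)
  case (Suc k)
  then have "T_gen_trees adj n k (utree adj n k # acc) \<le> k * (C + 1) + 1" "T_utree adj n k \<le> C"
    by auto
  then show ?case by simp
qed simp

lemma T_utree_le:
  assumes "adj_bounded n adj" "v < n"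
  shows "T_utree adj n v \<le> 17 * Suc n ^ 5"
proof -
  have "T_gen adj n [v] \<le> Suc n * (16 * Suc n ^ 4)"
    using T_gen_le[OF assms(1), of "[v]" n] assms(2) by simp
  also have "\<dots> = 16 * Suc n ^ 5"
    by (metis mult.left_commute power_Suc numeral_eq_Suc pred_numeral_simps)
  finally have "T_gen adj n [v] \<le> 16 * Suc n ^ 5" .
  moreover have "1 \<le> Suc n ^ 5" by simp
  ultimately show ?thesis unfolding T_utree.simps by linarith
qed

lemma length_utree_le: "length (utree adj n v) \<le> Suc n"
  using length_gen_le by simp

lemma length_utree_level_le:
  assumes "adj_bounded n adj" "v < n" "a \<in> set (utree adj n v)"
  shows "length a \<le> Suc n ^ 2"
  using length_gen_level_le[OF assms(1), of "[v]"] assms(2,3) by simp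

section \<open>Cost of the tree comparison stage\<close>

lemma T_check_is_le: "T_check_is i a b \<le> i * (length a + length b + 3) + 1"
  by (induction i) (auto simp: T_count_children_eq)

lemma T_levels_ok_le:
  "(\<And>a. a \<in> set as \<Longrightarrow> length a \<le> M) \<Longrightarrow> (\<And>b. b \<in> set bs \<Longrightarrow> length b \<le> M) \<Longrightarrow>
   T_levels_ok n as bs \<le> length as * (Suc n * (2 * M + 4)) + 1"
proof (induction n as bs rule: T_levels_ok.induct)
  case (2 n a as b bs)
  have "length a \<le> M" "length b \<le> M" using "2.prems" by auto
  then have "(n - 1) * (length a + length b + 3) \<le> n * (2 * M + 4)"
    by (intro mult_le_mono) auto
  with T_check_is_le[of "n - 1" a b] \<open>length a \<le> M\<close> \<open>length b \<le> M\<close>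
  have "T_length a + T_length b + T_check_is (n - 1) a b + 1 \<le> Suc n * (2 * M + 4)"
    by (simp add: T_length)
  with 2 show ?case
    by (cases "length a = length b"; cases "check_is (n - 1) a b"; simp add: T_length)
qed auto

lemma T_equiv_trees_le:
  assumes "length T \<le> Suc n" "length S \<le> Suc n"
    and "\<And>a. a \<in> set T \<Longrightarrow> length a \<le> Suc n ^ 2" "\<And>b. b \<in> set S \<Longrightarrow> length b \<le> Suc n ^ 2"
  shows "T_equiv_trees n T S \<le> 12 * Suc n ^ 4"
proof -
  let ?N = "Suc n"
  have "T_levels_ok n T S \<le> length T * (?N * (2 * ?N ^ 2 + 4)) + 1"
    using assms(3,4) by (rule T_levels_ok_le)
  also have "\<dots> \<le> ?N * (?N * (6 * ?N ^ 2)) + 1"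
    using assms(1) by (intro add_mono mult_le_mono order_refl) auto
  also have "\<dots> = 6 * ?N ^ 4 + 1"
    by (simp add: power2_eq_square power4_eq_xxxx algebra_simps)
  finally have "T_levels_ok n T S \<le> 6 * ?N ^ 4 + 1" .
  moreover have "2 * ?N + 4 \<le> 6 * ?N ^ 4"
    using power_increasing[of 1 4 ?N] by simp
  ultimately show ?thesis using assms(1,2) by (auto simp: T_length)
qed

lemma T_match_one_le:
  "(\<And>S. S \<in> set Ss \<Longrightarrow> T_equiv_trees n T S \<le> E) \<Longrightarrow> T_match_one n T Ss \<le> length Ss * (E + 1) + 1"
proof (induction Ss)
  case (Cons S Ss)
  then have "T_equiv_trees n T S \<le> E" "T_match_one n T Ss \<le> length Ss * (E + 1) + 1"
    by simp_all
  then show ?case by (simp add: Let_def del: T_equiv_trees.simps equiv_trees.simps)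
qed simp

lemma set_snd_match_one_subset: "set (snd (match_one n T Ss)) \<subseteq> set Ss"
  by (induction Ss) (auto simp: Let_def)

lemma length_snd_match_one_le: "length (snd (match_one n T Ss)) \<le> length Ss"
  by (induction Ss) (auto simp: Let_def)

lemma T_compare_all_le:
  "(\<And>T S. T \<in> set Ts \<Longrightarrow> S \<in> S0 \<Longrightarrow> T_equiv_trees n T S \<le> E) \<Longrightarrow> set Ss \<subseteq> S0 \<Longrightarrow> length Ss \<le> K \<Longrightarrow>
   T_compare_all n Ts Ss \<le> length Ts * (K * (E + 1) + 2) + 1"
proof (induction n Ts Ss rule: T_compare_all.induct)
  case (3 n T Ts Ss)
  have "T_match_one n T Ss \<le> length Ss * (E + 1) + 1"
    using "3.prems" by (intro T_match_one_le) (auto simp del: T_equiv_trees.simps)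
  moreover have "length Ss * (E + 1) \<le> K * (E + 1)"
    using "3.prems"(3) by (rule mult_le_mono1)
  moreover have "T_compare_all n Ts (snd (match_one n T Ss)) \<le> length Ts * (K * (E + 1) + 2) + 1"
    using "3.prems" set_snd_match_one_subset[of n T Ss] length_snd_match_one_le[of n T Ss]
    by (intro "3.IH") auto
  ultimately show ?case by simp
qed auto

lemma T_uniqueness_tree_alg_le:
  assumes "simple_graph_adj n adjG" "simple_graph_adj n adjH"
  shows "T_uniqueness_tree_alg n adjG adjH \<le> 55 * Suc n ^ 6"
proof -
  let ?Ts = "gen_trees adjG n n []" and ?Ss = "gen_trees adjH n n []"
  define N where "N = Suc n"
  have G: "adj_bounded n adjG" and H: "adj_bounded n adjH"
    using assms by (auto intro: simple_graph_adj_imp_adj_bounded)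
  have gen_G: "T_gen_trees adjG n n [] \<le> n * (17 * N ^ 5 + 1) + 1"
    using T_utree_le[OF G, folded N_def] by (intro T_gen_trees_le)
  have gen_H: "T_gen_trees adjH n n [] \<le> n * (17 * N ^ 5 + 1) + 1"
    using T_utree_le[OF H, folded N_def] by (intro T_gen_trees_le)
  have "T_equiv_trees n T S \<le> 12 * N ^ 4" if T: "T \<in> set ?Ts" and S: "S \<in> set ?Ss" for T S
  proof -
    obtain v where "v < n" "T = utree adjG n v"
      using T by (auto simp: gen_trees_eq simp del: utree.simps)
    moreover obtain w where "w < n" "S = utree adjH n w"
      using S by (auto simp: gen_trees_eq simp del: utree.simps)
    ultimately
    show ?thesis
      unfolding N_def using length_utree_level_le[OF G] length_utree_level_le[OF H] length_utree_le
      by (intro T_equiv_trees_le) (auto simp del: utree.simps)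
  qed
  then have cmp: "T_compare_all n ?Ts ?Ss \<le> n * (n * (12 * N ^ 4 + 1) + 2) + 1"
    using T_compare_all_le[of ?Ts "set ?Ss" n _ ?Ss n] by (simp add: gen_trees_eq)
  have "n \<le> N" "1 \<le> N" by (simp_all add: N_def)
  have "T_uniqueness_tree_alg n adjG adjH
        \<le> 2 * (n * (17 * N ^ 5 + 1) + 1) + (n * (n * (12 * N ^ 4 + 1) + 2) + 1) + 1"
    using gen_G gen_H cmp by simp
  also have "\<dots> \<le> 2 * (N * (17 * N ^ 5 + 1) + 1) + (N * (N * (12 * N ^ 4 + 1) + 2) + 1) + 1"
    using \<open>n \<le> N\<close> by (intro add_mono mult_le_mono order_refl)
  also have "\<dots> = 46 * N ^ 6 + N ^ 2 + 4 * N + 4"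
    by (simp add: algebra_simps power_numeral_reduce)
  also have "\<dots> \<le> 55 * N ^ 6"
  proof -
    have "N \<le> N ^ 6" "N ^ 2 \<le> N ^ 6" "1 \<le> N ^ 6"
      using power_increasing[of 1 6 N] power_increasing[of 2 6 N] \<open>1 \<le> N\<close> by simp_all
    then show ?thesis by linarith
  qed
  finally show ?thesis unfolding N_def .
qed

lemma worst_time_le: "worst_time n \<le> 55 * Suc n ^ 6"
proof -
  let ?S = "{T_uniqueness_tree_alg n adjG adjH | adjG adjH.
               simple_graph_adj n adjG \<and> simple_graph_adj n adjH}"
  have bounded: "?S \<subseteq> {..55 * Suc n ^ 6}"
    using T_uniqueness_tree_alg_le by auto
  have "simple_graph_adj n (replicate n [])"
    by (simp add: simple_graph_adj_def)
  then have "?S \<noteq> {}" by blast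
  moreover have "finite ?S"
    using bounded by (rule finite_subset) simp
  ultimately show ?thesis
    using bounded unfolding worst_time_def by (simp add: Max_le_iff subset_iff)
qed

theorem theorem1:
  shows "(\<lambda>n. real (worst_time n)) \<in> O(\<lambda>n. real n ^ 7)"
proof -
  have "(\<lambda>n. real (worst_time n)) \<in> O(\<lambda>n. (real n + 1) ^ 6)"
  proof (intro bigoI[where c = 55] always_eventually allI)
    fix n
    have "real (worst_time n) \<le> real (55 * Suc n ^ 6)"
      using worst_time_le by (simp only: of_nat_le_iff)
    then show "norm (real (worst_time n)) \<le> 55 * norm ((real n + 1) ^ 6)"
      by (simp add: add.commute)
  qed
  also have "(\<lambda>n. (real n + 1) ^ 6) \<in> O(\<lambda>n. real n ^ 7)"
    by real_asymp
  finally show ?thesis .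
qed

end
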